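(* Let $G$ be a finite group, let $S$ be an irreducible $\mathbb{R}G$-module of odd dimension such that $(G,S)$ has the eigenvalue one property, and let $V$ be the direct sum of an odd number of copies of $S$. Then $(G,V)$ has the eigenvalue one property.
   Context: For a finite group $G$ and a finite-dimensional $\mathbb{R}G$-module $W$ affording $\rho\colon G\to\mathrm{GL}(W)$, the pair $(G,W)$ has the eigenvalue one property if for every $n\in N_{\mathrm{GL}(W)}(\rho(G))$ of finite order there is $g\in G$ such that $\rho(g)n$ has eigenvalue $1$. *)

theory Defs
  imports "HOL-Algebra.Group" "Jordan_Normal_Form.Char_Poly"
begin

definition real_rep :: "('g, 'b) monoid_scheme \<Rightarrow> nat \<Rightarrow> ('g \<Rightarrow> real mat) \<Rightarrow> bool" where
  "real_rep G d \<rho> \<longleftrightarrow>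
     (\<forall>g \<in> carrier G. \<rho> g \<in> carrier_mat d d) \<and>
     \<rho> \<one>\<^bsub>G\<^esub> = 1\<^sub>m d \<and>
     (\<forall>g \<in> carrier G. \<forall>h \<in> carrier G. \<rho> (g \<otimes>\<^bsub>G\<^esub> h) = \<rho> g * \<rho> h)"

definition real_subspace :: "nat \<Rightarrow> real vec set \<Rightarrow> bool" where
  "real_subspace d W \<longleftrightarrow> W \<subseteq> carrier_vec d \<and> 0\<^sub>v d \<in> W \<and>
     (\<forall>v \<in> W. \<forall>w \<in> W. v + w \<in> W) \<and> (\<forall>c. \<forall>v \<in> W. c \<cdot>\<^sub>v v \<in> W)"

definition irreducible_rep :: "('g, 'b) monoid_scheme \<Rightarrow> nat \<Rightarrow> ('g \<Rightarrow> real mat) \<Rightarrow> bool" where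
  "irreducible_rep G d \<rho> \<longleftrightarrow> real_rep G d \<rho> \<and> d > 0 \<and>
     (\<forall>W. real_subspace d W \<and> (\<forall>g \<in> carrier G. \<forall>w \<in> W. \<rho> g *\<^sub>v w \<in> W)
        \<longrightarrow> W = {0\<^sub>v d} \<or> W = carrier_vec d)"

definition in_normalizer :: "('g, 'b) monoid_scheme \<Rightarrow> nat \<Rightarrow> ('g \<Rightarrow> real mat) \<Rightarrow> real mat \<Rightarrow> bool" where
  "in_normalizer G d \<rho> N \<longleftrightarrow> N \<in> carrier_mat d d \<and>
     (\<exists>M \<in> carrier_mat d d. N * M = 1\<^sub>m d \<and> M * N = 1\<^sub>m d \<and>
        (\<lambda>g. N * \<rho> g * M) ` carrier G = \<rho> ` carrier G)"

definition finite_order_mat :: "nat \<Rightarrow> real mat \<Rightarrow> bool" where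
  "finite_order_mat d N \<longleftrightarrow> (\<exists>k > 0. N ^\<^sub>m k = 1\<^sub>m d)"

definition eigenvalue_one_property :: "('g, 'b) monoid_scheme \<Rightarrow> nat \<Rightarrow> ('g \<Rightarrow> real mat) \<Rightarrow> bool" where
  "eigenvalue_one_property G d \<rho> \<longleftrightarrow>
     (\<forall>N. in_normalizer G d \<rho> N \<and> finite_order_mat d N \<longrightarrow>
        (\<exists>g \<in> carrier G. eigenvalue (\<rho> g * N) 1))"

definition rep_copies :: "nat \<Rightarrow> ('g \<Rightarrow> real mat) \<Rightarrow> 'g \<Rightarrow> real mat" where
  "rep_copies k \<rho> = (\<lambda>g. diag_block_mat (replicate k (\<rho> g)))"

end

(* Let N normalise k copies of rho and have finite order. Conjugation by N permutes the
   matrices 1 (x) rho(g), so every d x d block of N intertwines rho with its twist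
   rho o sigma for one map sigma of G. By Schur's lemma a nonzero such block X is invertible,
   and since d is odd every block has the form a X (a real eigenvalue of X^-1 Y exists), i.e.
   N = A (x) X with X in the normaliser of rho(G). From N^m = 1 we get A^m = c 1 and
   X^m = c^-1 1; as k is odd, A has a real eigenvalue mu, and mu^m = c. So mu X has finite
   order, the eigenvalue one property of rho gives g and v with rho(g) mu X v = v, and for an
   eigenvector w of A to mu the vector w (x) v is fixed by (1 (x) rho(g)) N = A (x) rho(g) X. *)

theory Submission
  imports Defs
begin

lemma div_mod_less_of_less_mult:
  fixes p k d :: nat
  assumes "p < k * d"
  shows "p div d < k" "p mod d < d"
proof -
  have "0 < d" using assms by (cases d) auto
  then show "p div d < k" "p mod d < d" using assms by (simp_all add: less_mult_imp_div_less)
qed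

lemma block_index_less:
  fixes l k u d :: nat
  assumes "l < k" "u < d"
  shows "l * d + u < k * d"
proof -
  have "l * d + u < (l + 1) * d" using assms by simp
  also have "\<dots> \<le> k * d" using assms by (intro mult_le_mono1) simp
  finally show ?thesis .
qed

lemma sum_mult_ivl_blocks:
  fixes f :: "nat \<Rightarrow> 'a::comm_monoid_add"
  shows "(\<Sum>p\<in>{0..<k * d}. f p) = (\<Sum>l\<in>{0..<k}. \<Sum>u\<in>{0..<d}. f (l * d + u))"
proof -
  have "(\<Sum>p\<in>{0..<k * d}. f p) = (\<Sum>l<k. \<Sum>p\<in>{l * d..<l * d + d}. f p)"
    by (simp add: sum.nat_group atLeast0LessThan)
  also have "\<dots> = (\<Sum>l\<in>{0..<k}. \<Sum>u\<in>{0..<d}. f (l * d + u))"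
    using sum.shift_bounds_nat_ivl[of f 0 "_ * d" d]
    by (simp add: atLeast0LessThan add.commute)
  finally show ?thesis .
qed

lemma smult_smult_mat [simp]: "a \<cdot>\<^sub>m (b \<cdot>\<^sub>m A) = (a * b :: 'a::comm_ring_1) \<cdot>\<^sub>m A"
  by (rule eq_matI) auto

lemma one_smult_mat [simp]: "(1 :: 'a::comm_ring_1) \<cdot>\<^sub>m A = A"
  by (rule eq_matI) auto

lemma smult_mat_mult_vec:
  fixes A :: "'a::comm_ring_1 mat"
  assumes "A \<in> carrier_mat n m" "v \<in> carrier_vec m"
  shows "(c \<cdot>\<^sub>m A) *\<^sub>v v = c \<cdot>\<^sub>v (A *\<^sub>v v)"
  by (rule eq_vecI) (use assms in \<open>auto simp: scalar_prod_def sum_distrib_left algebra_simps\<close>)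

lemma smult_pow_mat:
  fixes A :: "'a::comm_ring_1 mat"
  assumes A: "A \<in> carrier_mat n n"
  shows "(c \<cdot>\<^sub>m A) ^\<^sub>m i = c ^ i \<cdot>\<^sub>m A ^\<^sub>m i"
proof (induction i)
  case (Suc i)
  have Ai: "A ^\<^sub>m i \<in> carrier_mat n n" using A by simp
  have "(c \<cdot>\<^sub>m A) ^\<^sub>m Suc i = c ^ i \<cdot>\<^sub>m (A ^\<^sub>m i * (c \<cdot>\<^sub>m A))"
    using Suc mult_smult_assoc_mat[OF Ai smult_carrier_mat[OF A]] by simp
  also have "\<dots> = c ^ i \<cdot>\<^sub>m (c \<cdot>\<^sub>m (A ^\<^sub>m i * A))"
    using mult_smult_distrib[OF Ai A] by simp
  also have "\<dots> = c ^ Suc i \<cdot>\<^sub>m A ^\<^sub>m Suc i"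
    by (rule eq_matI) auto
  finally show ?case .
qed (auto intro: eq_matI)

lemma smult_vec_right_cancel:
  fixes a b :: "'a::idom"
  assumes "v \<in> carrier_vec n" "v \<noteq> 0\<^sub>v n" "a \<cdot>\<^sub>v v = b \<cdot>\<^sub>v v"
  shows "a = b"
proof -
  obtain i where "i < n" "v $ i \<noteq> 0"
    using assms(1,2) by (metis carrier_vecD eq_vecI index_zero_vec)
  then show ?thesis
    using arg_cong[OF assms(3), of "\<lambda>x. x $ i"] assms(1) by auto
qed

lemma eigenvector_smult_mat:
  fixes A :: "'a::field mat"
  assumes A: "A \<in> carrier_mat n n" and c: "c \<noteq> 0" and ev: "eigenvector (c \<cdot>\<^sub>m A) v e"
  shows "eigenvector A v (e / c)"
proof -
  have v: "v \<in> carrier_vec n" "v \<noteq> 0\<^sub>v n" "c \<cdot>\<^sub>v (A *\<^sub>v v) = e \<cdot>\<^sub>v v"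
    using ev A smult_mat_mult_vec[OF A] by (auto simp: eigenvector_def)
  have "A *\<^sub>v v = inverse c \<cdot>\<^sub>v (c \<cdot>\<^sub>v (A *\<^sub>v v))"
    using c by (simp add: smult_smult_assoc)
  also have "\<dots> = (e / c) \<cdot>\<^sub>v v"
    using v(3) by (simp add: smult_smult_assoc field_simps)
  finally show ?thesis
    using v A by (simp add: eigenvector_def)
qed

lemma det_nonzero_imp_inverse:
  fixes A :: "'a::field mat"
  assumes "A \<in> carrier_mat n n" "det A \<noteq> 0"
  shows "\<exists>M \<in> carrier_mat n n. A * M = 1\<^sub>m n \<and> M * A = 1\<^sub>m n"
  using det_non_zero_imp_unit[OF assms, of undefined] assms(1)
  unfolding Units_def by (auto simp: ring_mat_simps)

lemma odd_degree_real_poly_root: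
  fixes p :: "real poly"
  assumes "odd (degree p)"
  shows "\<exists>x. poly p x = 0"
proof -
  define q where "q = Polynomial.smult (sgn (lead_coeff p)) p"
  have "p \<noteq> 0" using assms by auto
  then have lq: "lead_coeff q > 0" and dq: "degree q = degree p" and root: "poly q x = 0 \<longleftrightarrow> poly p x = 0" for x
    by (auto simp: q_def sgn_if mult_less_0_iff)
  define r where "r = - pcompose q [:0, -1:]"
  have "lead_coeff (pcompose q [:0, -1:]) = lead_coeff q * lead_coeff [:0, -1 :: real:] ^ degree q"
    by (rule lead_coeff_comp) simp
  then have "lead_coeff r > 0"
    using lq assms dq by (simp add: r_def)
  obtain x1 where x1: "\<forall>x\<ge>x1. poly q x \<ge> lead_coeff q" using poly_pinfty_gt_lc[OF lq] by auto
  obtain x2 where x2: "\<forall>x\<ge>x2. poly r x \<ge> lead_coeff r"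
    using poly_pinfty_gt_lc[OF \<open>lead_coeff r > 0\<close>] by auto
  define x where "x = max (max x1 x2) 1"
  have "poly q x \<ge> lead_coeff q" "poly r x \<ge> lead_coeff r"
    using x1 x2 by (simp_all add: x_def)
  then have "poly q x > 0" and "poly q (- x) < 0"
    using lq \<open>lead_coeff r > 0\<close> by (simp_all add: r_def poly_pcompose)
  moreover have "- x < x" by (simp add: x_def)
  ultimately obtain y where "poly q y = 0"
    using poly_IVT_pos[of "- x" x q] by blast
  then show ?thesis using root by blast
qed

lemma odd_dim_real_eigenvalue:
  fixes A :: "real mat"
  assumes "A \<in> carrier_mat n n" "odd n"
  shows "\<exists>l. eigenvalue A l"
  using odd_degree_real_poly_root[of "char_poly A"] eigenvalue_root_char_poly[OF assms(1)]
    degree_monic_char_poly[OF assms(1)] assms(2) by auto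

section \<open>Kronecker products\<close>

definition kron_mat :: "'a::comm_ring_1 mat \<Rightarrow> 'a mat \<Rightarrow> 'a mat" where
  "kron_mat A B = mat (dim_row A * dim_row B) (dim_col A * dim_col B)
     (\<lambda>(p, q). A $$ (p div dim_row B, q div dim_col B) * B $$ (p mod dim_row B, q mod dim_col B))"

definition kron_vec :: "'a::comm_ring_1 vec \<Rightarrow> 'a vec \<Rightarrow> 'a vec" where
  "kron_vec v w = vec (dim_vec v * dim_vec w) (\<lambda>p. v $ (p div dim_vec w) * w $ (p mod dim_vec w))"

lemma dim_kron_mat [simp]:
  "dim_row (kron_mat A B) = dim_row A * dim_row B"
  "dim_col (kron_mat A B) = dim_col A * dim_col B"
  by (simp_all add: kron_mat_def)

lemma kron_mat_carrier [simp]: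
  "A \<in> carrier_mat k k' \<Longrightarrow> B \<in> carrier_mat d d' \<Longrightarrow> kron_mat A B \<in> carrier_mat (k * d) (k' * d')"
  by (intro carrier_matI) auto

lemma index_kron_mat [simp]:
  "p < dim_row A * dim_row B \<Longrightarrow> q < dim_col A * dim_col B \<Longrightarrow>
   kron_mat A B $$ (p, q) = A $$ (p div dim_row B, q div dim_col B) * B $$ (p mod dim_row B, q mod dim_col B)"
  by (simp add: kron_mat_def)

lemma index_kron_mat_block:
  assumes "A \<in> carrier_mat k k'" "B \<in> carrier_mat d d'" "i < k" "r < d" "j < k'" "s < d'"
  shows "kron_mat A B $$ (i * d + r, j * d' + s) = A $$ (i, j) * B $$ (r, s)"
  using assms block_index_less[OF assms(3,4)] block_index_less[OF assms(5,6)] by simp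

lemma dim_kron_vec [simp]: "dim_vec (kron_vec v w) = dim_vec v * dim_vec w"
  by (simp add: kron_vec_def)

lemma index_kron_vec [simp]:
  "p < dim_vec v * dim_vec w \<Longrightarrow> kron_vec v w $ p = v $ (p div dim_vec w) * w $ (p mod dim_vec w)"
  by (simp add: kron_vec_def)

lemma kron_vec_carrier [simp]:
  "v \<in> carrier_vec k \<Longrightarrow> w \<in> carrier_vec d \<Longrightarrow> kron_vec v w \<in> carrier_vec (k * d)"
  by (intro carrier_vecI) auto

lemma kron_mat_mult:
  assumes "A \<in> carrier_mat k k'" "A' \<in> carrier_mat k' k''"
    and "B \<in> carrier_mat d d'" "B' \<in> carrier_mat d' d''"
  shows "kron_mat A B * kron_mat A' B' = kron_mat (A * A') (B * B')"
proof (rule eq_matI)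
  fix p q assume "p < dim_row (kron_mat (A * A') (B * B'))" "q < dim_col (kron_mat (A * A') (B * B'))"
  then have p: "p < k * d" and q: "q < k'' * d''" using assms by auto
  note pq = div_mod_less_of_less_mult[OF p] div_mod_less_of_less_mult[OF q]
  have "(kron_mat A B * kron_mat A' B') $$ (p, q) =
      (\<Sum>t\<in>{0..<k' * d'}. kron_mat A B $$ (p, t) * kron_mat A' B' $$ (t, q))"
    using assms p q by (simp add: scalar_prod_def)
  also have "\<dots> = (\<Sum>t\<in>{0..<k' * d'}. (A $$ (p div d, t div d') * A' $$ (t div d', q div d''))
      * (B $$ (p mod d, t mod d') * B' $$ (t mod d', q mod d'')))"
    using assms p q by (intro sum.cong refl) simp
  also have "\<dots> = (\<Sum>l\<in>{0..<k'}. \<Sum>u\<in>{0..<d'}.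
      (A $$ (p div d, l) * A' $$ (l, q div d'')) * (B $$ (p mod d, u) * B' $$ (u, q mod d'')))"
    unfolding sum_mult_ivl_blocks by (intro sum.cong refl) simp
  also have "\<dots> = (\<Sum>l\<in>{0..<k'}. A $$ (p div d, l) * A' $$ (l, q div d''))
      * (\<Sum>u\<in>{0..<d'}. B $$ (p mod d, u) * B' $$ (u, q mod d''))"
    by (simp add: sum_product)
  also have "\<dots> = kron_mat (A * A') (B * B') $$ (p, q)"
    using assms p q pq by (simp add: scalar_prod_def)
  finally show "(kron_mat A B * kron_mat A' B') $$ (p, q) = kron_mat (A * A') (B * B') $$ (p, q)" .
qed (use assms in auto)

lemma kron_mat_one: "kron_mat (1\<^sub>m k) (1\<^sub>m d) = 1\<^sub>m (k * d)"
proof (rule eq_matI)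
  fix p q assume "p < dim_row (1\<^sub>m (k * d))" "q < dim_col (1\<^sub>m (k * d))"
  then have p: "p < k * d" and q: "q < k * d" by auto
  have "p div d = q div d \<and> p mod d = q mod d \<longleftrightarrow> p = q"
    by (metis div_mult_mod_eq)
  then show "kron_mat (1\<^sub>m k) (1\<^sub>m d) $$ (p, q) = 1\<^sub>m (k * d) $$ (p, q)"
    using p q div_mod_less_of_less_mult[OF p] div_mod_less_of_less_mult[OF q] by auto
qed auto

lemma kron_mat_pow:
  assumes "A \<in> carrier_mat k k" "B \<in> carrier_mat d d"
  shows "kron_mat A B ^\<^sub>m n = kron_mat (A ^\<^sub>m n) (B ^\<^sub>m n)"
proof (induction n)
  case (Suc n)
  have "A ^\<^sub>m n \<in> carrier_mat k k" "B ^\<^sub>m n \<in> carrier_mat d d"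
    using assms by simp_all
  then show ?case
    using Suc kron_mat_mult[OF _ assms(1) _ assms(2)] by simp
qed (simp add: kron_mat_one)

lemma kron_mat_mult_kron_vec:
  assumes "A \<in> carrier_mat k k'" "B \<in> carrier_mat d d'" "v \<in> carrier_vec k'" "w \<in> carrier_vec d'"
  shows "kron_mat A B *\<^sub>v kron_vec v w = kron_vec (A *\<^sub>v v) (B *\<^sub>v w)"
proof (rule eq_vecI)
  fix p assume "p < dim_vec (kron_vec (A *\<^sub>v v) (B *\<^sub>v w))"
  then have p: "p < k * d" using assms by simp
  have "(kron_mat A B *\<^sub>v kron_vec v w) $ p =
      (\<Sum>t\<in>{0..<k' * d'}. kron_mat A B $$ (p, t) * kron_vec v w $ t)"
    using assms p by (simp add: scalar_prod_def)
  also have "\<dots> = (\<Sum>t\<in>{0..<k' * d'}.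
      (A $$ (p div d, t div d') * v $ (t div d')) * (B $$ (p mod d, t mod d') * w $ (t mod d')))"
    using assms p by (intro sum.cong refl) simp
  also have "\<dots> = (\<Sum>l\<in>{0..<k'}. \<Sum>u\<in>{0..<d'}. (A $$ (p div d, l) * v $ l) * (B $$ (p mod d, u) * w $ u))"
    unfolding sum_mult_ivl_blocks by (intro sum.cong refl) simp
  also have "\<dots> = (\<Sum>l\<in>{0..<k'}. A $$ (p div d, l) * v $ l) * (\<Sum>u\<in>{0..<d'}. B $$ (p mod d, u) * w $ u)"
    by (simp add: sum_product)
  also have "\<dots> = kron_vec (A *\<^sub>v v) (B *\<^sub>v w) $ p"
    using assms p div_mod_less_of_less_mult[OF p] by (simp add: scalar_prod_def)
  finally show "(kron_mat A B *\<^sub>v kron_vec v w) $ p = kron_vec (A *\<^sub>v v) (B *\<^sub>v w) $ p" .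
qed (use assms in auto)

lemma eigenvector_kron:
  fixes A B :: "'a::idom mat"
  assumes A: "A \<in> carrier_mat k k" and B: "B \<in> carrier_mat d d"
    and v: "eigenvector A v a" and w: "eigenvector B w b"
  shows "eigenvector (kron_mat A B) (kron_vec v w) (a * b)"
proof -
  have vw: "v \<in> carrier_vec k" "v \<noteq> 0\<^sub>v k" "A *\<^sub>v v = a \<cdot>\<^sub>v v"
    "w \<in> carrier_vec d" "w \<noteq> 0\<^sub>v d" "B *\<^sub>v w = b \<cdot>\<^sub>v w"
    using v w A B by (auto simp: eigenvector_def)
  obtain i j where ij: "i < k" "v $ i \<noteq> 0" "j < d" "w $ j \<noteq> 0"
    using vw by (metis carrier_vecD eq_vecI index_zero_vec)
  have "kron_vec v w $ (i * d + j) \<noteq> 0"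
    using ij vw block_index_less[OF ij(1,3)] by simp
  then have "kron_vec v w \<noteq> 0\<^sub>v (k * d)"
    using ij by (metis block_index_less index_zero_vec(1))
  moreover have "kron_vec (a \<cdot>\<^sub>v v) (b \<cdot>\<^sub>v w) = (a * b) \<cdot>\<^sub>v kron_vec v w"
    using vw by (intro eq_vecI) (auto simp: div_mod_less_of_less_mult)
  ultimately show ?thesis
    using A B vw by (auto simp: eigenvector_def kron_mat_mult_kron_vec)
qed

lemma kron_mat_eq_one_imp_scalar:
  fixes A B :: "'a::field mat"
  assumes A: "A \<in> carrier_mat k k" and B: "B \<in> carrier_mat d d" and "0 < k" "0 < d"
    and AB: "kron_mat A B = 1\<^sub>m (k * d)"
  obtains c where "c \<noteq> 0" "A = c \<cdot>\<^sub>m 1\<^sub>m k" "B = inverse c \<cdot>\<^sub>m 1\<^sub>m d"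
proof -
  have entry: "A $$ (i, j) * B $$ (r, s) = (if i = j \<and> r = s then 1 else 0)"
    if "i < k" "j < k" "r < d" "s < d" for i j r s
  proof -
    have "(i * d + r) div d = i" "(i * d + r) mod d = r" "(j * d + s) div d = j" "(j * d + s) mod d = s"
      using that by simp_all
    then have "i * d + r = j * d + s \<longleftrightarrow> i = j \<and> r = s"
      by metis
    then show ?thesis
      using AB that index_kron_mat_block[OF A B that(1,3,2,4)]
        block_index_less[OF that(1,3)] block_index_less[OF that(2,4)] by simp
  qed
  define c where "c = A $$ (0, 0)"
  have "c * B $$ (0, 0) = 1"
    using entry[of 0 0 0 0] assms(3,4) by (simp add: c_def)
  then have c: "c \<noteq> 0" and B00: "B $$ (0, 0) = inverse c"
    by (auto simp: inverse_unique mult.commute)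
  have "A $$ (i, j) = (if i = j then c else 0)" if "i < k" "j < k" for i j
  proof -
    have "A $$ (i, j) * inverse c = (if i = j then 1 else 0)"
      using entry[of i j 0 0] that assms(4) B00 by simp
    then show ?thesis
      using c by (auto simp: field_simps split: if_splits)
  qed
  then have "A = c \<cdot>\<^sub>m 1\<^sub>m k"
    by (intro eq_matI) (use A in auto)
  moreover have "B $$ (r, s) = (if r = s then inverse c else 0)" if "r < d" "s < d" for r s
  proof -
    have "c * B $$ (r, s) = (if r = s then 1 else 0)"
      using entry[of 0 0 r s] that assms(3) by (simp add: c_def)
    then show ?thesis
      using c by (auto simp: field_simps split: if_splits)
  qed
  then have "B = inverse c \<cdot>\<^sub>m 1\<^sub>m d"
    by (intro eq_matI) (use B in auto)
  ultimately show thesis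
    using that c by blast
qed

lemma kron_mat_finite_order_rescale:
  fixes A X :: "real mat"
  assumes A: "A \<in> carrier_mat k k" "odd k" and X: "X \<in> carrier_mat d d" "0 < d"
    and fo: "finite_order_mat (k * d) (kron_mat A X)"
  obtains \<mu> w where "\<mu> \<noteq> 0" "eigenvector A w \<mu>" "finite_order_mat d (\<mu> \<cdot>\<^sub>m X)"
proof -
  obtain m where m: "0 < m" and "kron_mat A X ^\<^sub>m m = 1\<^sub>m (k * d)"
    using fo by (auto simp: finite_order_mat_def)
  then have "kron_mat (A ^\<^sub>m m) (X ^\<^sub>m m) = 1\<^sub>m (k * d)"
    by (simp add: kron_mat_pow[OF A(1) X(1)])
  moreover have "0 < k" using A(2) by (rule odd_pos)
  ultimately obtain c where c: "c \<noteq> 0" "A ^\<^sub>m m = c \<cdot>\<^sub>m 1\<^sub>m k" "X ^\<^sub>m m = inverse c \<cdot>\<^sub>m 1\<^sub>m d"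
    using kron_mat_eq_one_imp_scalar[of "A ^\<^sub>m m" k "X ^\<^sub>m m" d] A X by auto
  obtain \<mu> w where ev: "eigenvector A w \<mu>"
    using odd_dim_real_eigenvalue[OF A] by (auto simp: eigenvalue_def)
  have w: "w \<in> carrier_vec k" "w \<noteq> 0\<^sub>v k"
    using ev A(1) by (auto simp: eigenvector_def)
  have "c \<cdot>\<^sub>v w = A ^\<^sub>m m *\<^sub>v w"
    using c(2) w smult_mat_mult_vec[OF one_carrier_mat w(1)] by simp
  also have "\<dots> = \<mu> ^ m \<cdot>\<^sub>v w"
    by (rule eigenvector_pow[OF A(1) ev])
  finally have "\<mu> ^ m = c"
    using smult_vec_right_cancel[OF w] by metis
  then have "\<mu> \<noteq> 0" and "(\<mu> \<cdot>\<^sub>m X) ^\<^sub>m m = 1\<^sub>m d"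
    using c m by (auto simp: smult_pow_mat[OF X(1)])
  then show thesis
    using that ev m by (auto simp: finite_order_mat_def)
qed

lemma index_kron_one_mat:
  assumes "B \<in> carrier_mat d d" "p < k * d" "q < k * d"
  shows "kron_mat (1\<^sub>m k) B $$ (p, q) = (if p div d = q div d then B $$ (p mod d, q mod d) else 0)"
  using assms div_mod_less_of_less_mult[OF assms(2)] div_mod_less_of_less_mult[OF assms(3)] by simp

lemma diag_block_mat_replicate_eq_kron:
  assumes B: "B \<in> carrier_mat d d"
  shows "diag_block_mat (replicate k B) = kron_mat (1\<^sub>m k) B"
proof (induction k)
  case 0
  show ?case by (auto simp: kron_mat_def)
next
  case (Suc k)
  have "diag_block_mat (replicate (Suc k) B) =
      four_block_mat B (0\<^sub>m d (k * d)) (0\<^sub>m (k * d) d) (kron_mat (1\<^sub>m k) B)"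
    using Suc B by (simp add: Let_def)
  also have "\<dots> = kron_mat (1\<^sub>m (Suc k)) B"
  proof (rule eq_matI)
    fix p q assume "p < dim_row (kron_mat (1\<^sub>m (Suc k)) B)" "q < dim_col (kron_mat (1\<^sub>m (Suc k)) B)"
    then have p: "p < Suc k * d" and q: "q < Suc k * d" using B by auto
    then have d: "0 < d" by (cases d) auto
    have shift: "x - d < k * d" "(x - d) div d = x div d - 1" "(x - d) mod d = x mod d" "x div d \<noteq> 0"
      if "\<not> x < d" "x < Suc k * d" for x
      using that d by (auto simp: le_div_geq le_mod_geq div_eq_0_iff)
    have rhs: "kron_mat (1\<^sub>m (Suc k)) B $$ (p, q) = (if p div d = q div d then B $$ (p mod d, q mod d) else 0)"
      by (rule index_kron_one_mat[OF B p q])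
    show "four_block_mat B (0\<^sub>m d (k * d)) (0\<^sub>m (k * d) d) (kron_mat (1\<^sub>m k) B) $$ (p, q) =
        kron_mat (1\<^sub>m (Suc k)) B $$ (p, q)"
    proof (cases "p < d \<or> q < d")
      case True
      then show ?thesis
        using rhs B p q d shift[of p] shift[of q] div_mod_less_of_less_mult[OF p] div_mod_less_of_less_mult[OF q]
        by auto
    next
      case False
      then have "p div d - 1 = q div d - 1 \<longleftrightarrow> p div d = q div d"
        using shift(4)[OF _ p] shift(4)[OF _ q] by auto
      then show ?thesis
        using rhs False B p q shift[of p] shift[of q] index_kron_one_mat[OF B, of "p - d" k "q - d"]
        by auto
    qed
  qed (use B in auto)
  finally show ?case .
qed

section \<open>Block decomposition\<close>

definition mat_block :: "nat \<Rightarrow> 'a mat \<Rightarrow> nat \<Rightarrow> nat \<Rightarrow> 'a mat" where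
  "mat_block d N i j = mat d d (\<lambda>(r, s). N $$ (i * d + r, j * d + s))"

lemma mat_block_carrier [simp]: "mat_block d N i j \<in> carrier_mat d d"
  by (simp add: mat_block_def)

lemma dim_mat_block [simp]: "dim_row (mat_block d N i j) = d" "dim_col (mat_block d N i j) = d"
  by (simp_all add: mat_block_def)

lemma index_mat_block [simp]:
  "r < d \<Longrightarrow> s < d \<Longrightarrow> mat_block d N i j $$ (r, s) = N $$ (i * d + r, j * d + s)"
  by (simp add: mat_block_def)

lemma mat_eq_blockI:
  assumes "N \<in> carrier_mat (k * d) (k * d)" "N' \<in> carrier_mat (k * d) (k * d)"
    and "\<And>i j. i < k \<Longrightarrow> j < k \<Longrightarrow> mat_block d N i j = mat_block d N' i j"
  shows "N = N'"
proof (rule eq_matI)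
  fix p q assume "p < dim_row N'" "q < dim_col N'"
  then have p: "p < k * d" and q: "q < k * d" using assms by auto
  note pq = div_mod_less_of_less_mult[OF p] div_mod_less_of_less_mult[OF q]
  have "N $$ (p, q) = mat_block d N (p div d) (q div d) $$ (p mod d, q mod d)"
    using pq by simp
  also have "\<dots> = mat_block d N' (p div d) (q div d) $$ (p mod d, q mod d)"
    using assms(3) pq by simp
  also have "\<dots> = N' $$ (p, q)"
    using pq by simp
  finally show "N $$ (p, q) = N' $$ (p, q)" .
qed (use assms in auto)

lemma mat_block_zero_mat:
  assumes "i < k" "j < k"
  shows "mat_block d (0\<^sub>m (k * d) (k * d)) i j = 0\<^sub>m d d"
  by (rule eq_matI) (use assms block_index_less[OF assms(1)] block_index_less[OF assms(2)] in auto)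

lemma mat_block_kron_mat:
  assumes "A \<in> carrier_mat k k" "B \<in> carrier_mat d d" "i < k" "j < k"
  shows "mat_block d (kron_mat A B) i j = A $$ (i, j) \<cdot>\<^sub>m B"
  by (rule eq_matI) (use assms in \<open>auto simp: index_kron_mat_block[OF assms(1,2)]\<close>)

lemma mat_block_kron_one_mat_diag:
  assumes "B \<in> carrier_mat d d" "i < k"
  shows "mat_block d (kron_mat (1\<^sub>m k) B) i i = B"
  using mat_block_kron_mat[OF one_carrier_mat assms(1) assms(2) assms(2)] assms by simp

lemma mat_block_mult_kron_one_right:
  assumes N: "N \<in> carrier_mat (k * d) (k * d)" and B: "B \<in> carrier_mat d d" and ij: "i < k" "j < k"
  shows "mat_block d (N * kron_mat (1\<^sub>m k) B) i j = mat_block d N i j * B"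
proof (rule eq_matI)
  fix r s assume "r < dim_row (mat_block d N i j * B)" "s < dim_col (mat_block d N i j * B)"
  then have r: "r < d" and s: "s < d" using B by auto
  have "mat_block d (N * kron_mat (1\<^sub>m k) B) i j $$ (r, s) =
      (\<Sum>t\<in>{0..<k * d}. N $$ (i * d + r, t) * kron_mat (1\<^sub>m k) B $$ (t, j * d + s))"
    using r s N B block_index_less[OF ij(1) r] block_index_less[OF ij(2) s] by (simp add: scalar_prod_def)
  also have "\<dots> = (\<Sum>t\<in>{0..<k * d}. N $$ (i * d + r, t) * (if t div d = j then B $$ (t mod d, s) else 0))"
    using s block_index_less[OF ij(2) s] by (intro sum.cong refl) (simp add: index_kron_one_mat[OF B])
  also have "\<dots> = (\<Sum>l\<in>{0..<k}. if l = j then \<Sum>u\<in>{0..<d}. N $$ (i * d + r, l * d + u) * B $$ (u, s) else 0)"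
    unfolding sum_mult_ivl_blocks by (intro sum.cong refl) auto
  also have "\<dots> = (mat_block d N i j * B) $$ (r, s)"
    using r s ij B by (simp add: scalar_prod_def)
  finally show "mat_block d (N * kron_mat (1\<^sub>m k) B) i j $$ (r, s) = (mat_block d N i j * B) $$ (r, s)" .
qed (use B in auto)

lemma mat_block_kron_one_mult_left:
  assumes N: "N \<in> carrier_mat (k * d) (k * d)" and B: "B \<in> carrier_mat d d" and ij: "i < k" "j < k"
  shows "mat_block d (kron_mat (1\<^sub>m k) B * N) i j = B * mat_block d N i j"
proof (rule eq_matI)
  fix r s assume "r < dim_row (B * mat_block d N i j)" "s < dim_col (B * mat_block d N i j)"
  then have r: "r < d" and s: "s < d" using B by auto
  have "mat_block d (kron_mat (1\<^sub>m k) B * N) i j $$ (r, s) =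
      (\<Sum>t\<in>{0..<k * d}. kron_mat (1\<^sub>m k) B $$ (i * d + r, t) * N $$ (t, j * d + s))"
    using r s N B block_index_less[OF ij(1) r] block_index_less[OF ij(2) s] by (simp add: scalar_prod_def)
  also have "\<dots> = (\<Sum>t\<in>{0..<k * d}. (if i = t div d then B $$ (r, t mod d) else 0) * N $$ (t, j * d + s))"
    using r block_index_less[OF ij(1) r] by (intro sum.cong refl) (simp add: index_kron_one_mat[OF B])
  also have "\<dots> = (\<Sum>l\<in>{0..<k}. if i = l then \<Sum>u\<in>{0..<d}. B $$ (r, u) * N $$ (l * d + u, j * d + s) else 0)"
    unfolding sum_mult_ivl_blocks by (intro sum.cong refl) auto
  also have "\<dots> = (B * mat_block d N i j) $$ (r, s)"
    using r s ij B by (simp add: scalar_prod_def)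
  finally show "mat_block d (kron_mat (1\<^sub>m k) B * N) i j $$ (r, s) = (B * mat_block d N i j) $$ (r, s)" .
qed (use B in auto)

section \<open>Twisted intertwiners\<close>

lemma real_rep_carrier_mat: "real_rep G d \<rho> \<Longrightarrow> g \<in> carrier G \<Longrightarrow> \<rho> g \<in> carrier_mat d d"
  by (simp add: real_rep_def)

lemma rep_copies_eq_kron_mat:
  "real_rep G d \<rho> \<Longrightarrow> g \<in> carrier G \<Longrightarrow> rep_copies k \<rho> g = kron_mat (1\<^sub>m k) (\<rho> g)"
  unfolding rep_copies_def by (rule diag_block_mat_replicate_eq_kron[OF real_rep_carrier_mat])

lemma in_normalizer_smult:
  assumes rep: "real_rep G d \<rho>" and X: "in_normalizer G d \<rho> X" and c: "c \<noteq> 0"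
  shows "in_normalizer G d \<rho> (c \<cdot>\<^sub>m X)"
proof -
  obtain M where Xc: "X \<in> carrier_mat d d" and M: "M \<in> carrier_mat d d" "X * M = 1\<^sub>m d" "M * X = 1\<^sub>m d"
    and img: "(\<lambda>g. X * \<rho> g * M) ` carrier G = \<rho> ` carrier G"
    using X unfolding in_normalizer_def by blast
  have "c \<cdot>\<^sub>m X * \<rho> g * (inverse c \<cdot>\<^sub>m M) = X * \<rho> g * M" if "g \<in> carrier G" for g
    using Xc M real_rep_carrier_mat[OF rep that] c
    by (simp add: mult_smult_assoc_mat[of _ d d] mult_smult_distrib[of _ d d])
  then have "(\<lambda>g. c \<cdot>\<^sub>m X * \<rho> g * (inverse c \<cdot>\<^sub>m M)) ` carrier G = \<rho> ` carrier G"
    using img by (metis (no_types, lifting) image_cong)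
  moreover have "c \<cdot>\<^sub>m X * (inverse c \<cdot>\<^sub>m M) = 1\<^sub>m d" "inverse c \<cdot>\<^sub>m M * (c \<cdot>\<^sub>m X) = 1\<^sub>m d"
    using Xc M c by (simp_all add: mult_smult_assoc_mat[of _ d d] mult_smult_distrib[of _ d d])
  ultimately show ?thesis
    using Xc M unfolding in_normalizer_def by (intro conjI bexI[of _ "inverse c \<cdot>\<^sub>m M"]) auto
qed

definition twisted_intertwiner ::
    "('g, 'b) monoid_scheme \<Rightarrow> ('g \<Rightarrow> real mat) \<Rightarrow> ('g \<Rightarrow> 'g) \<Rightarrow> real mat \<Rightarrow> bool" where
  "twisted_intertwiner G \<rho> \<sigma> X \<longleftrightarrow> (\<forall>g \<in> carrier G. X * \<rho> g = \<rho> (\<sigma> g) * X)"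

lemma twisted_intertwiner_minus_smult:
  assumes rep: "real_rep G d \<rho>" and \<sigma>: "\<sigma> \<in> carrier G \<rightarrow> carrier G"
    and X: "X \<in> carrier_mat d d" "twisted_intertwiner G \<rho> \<sigma> X"
    and Y: "Y \<in> carrier_mat d d" "twisted_intertwiner G \<rho> \<sigma> Y"
  shows "twisted_intertwiner G \<rho> \<sigma> (X - c \<cdot>\<^sub>m Y)"
  unfolding twisted_intertwiner_def
proof
  fix g assume g: "g \<in> carrier G"
  have \<rho>: "\<rho> g \<in> carrier_mat d d" "\<rho> (\<sigma> g) \<in> carrier_mat d d"
    using real_rep_carrier_mat[OF rep] g \<sigma> by auto
  have "(X - c \<cdot>\<^sub>m Y) * \<rho> g = X * \<rho> g - c \<cdot>\<^sub>m (Y * \<rho> g)"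
    using X Y \<rho> by (simp add: minus_mult_distrib_mat[of _ d d] mult_smult_assoc_mat[of _ d d])
  also have "\<dots> = \<rho> (\<sigma> g) * X - c \<cdot>\<^sub>m (\<rho> (\<sigma> g) * Y)"
    using X(2) Y(2) g by (simp add: twisted_intertwiner_def)
  also have "\<dots> = \<rho> (\<sigma> g) * (X - c \<cdot>\<^sub>m Y)"
    using X Y \<rho> by (simp add: mult_minus_distrib_mat[of _ d d] mult_smult_distrib[of _ d d])
  finally show "(X - c \<cdot>\<^sub>m Y) * \<rho> g = \<rho> (\<sigma> g) * (X - c \<cdot>\<^sub>m Y)" .
qed

(* Schur's lemma: the kernel of a twisted intertwiner is a subrepresentation. *)

lemma twisted_intertwiner_eq_0_of_kernel:
  assumes irr: "irreducible_rep G d \<rho>" and \<sigma>: "\<sigma> \<in> carrier G \<rightarrow> carrier G"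
    and X: "X \<in> carrier_mat d d" "twisted_intertwiner G \<rho> \<sigma> X"
    and v: "v \<in> carrier_vec d" "v \<noteq> 0\<^sub>v d" "X *\<^sub>v v = 0\<^sub>v d"
  shows "X = 0\<^sub>m d d"
proof -
  have rep: "\<rho> g \<in> carrier_mat d d" if "g \<in> carrier G" for g
    using irr that by (simp add: irreducible_rep_def real_rep_def)
  define W where "W = {w \<in> carrier_vec d. X *\<^sub>v w = 0\<^sub>v d}"
  have "real_subspace d W"
    unfolding real_subspace_def W_def using X(1) by (auto simp: mult_add_distrib_mat_vec mult_mat_vec)
  moreover have "\<rho> g *\<^sub>v w \<in> W" if g: "g \<in> carrier G" and w: "w \<in> W" for g w
  proof -
    have \<rho>: "\<rho> g \<in> carrier_mat d d" "\<rho> (\<sigma> g) \<in> carrier_mat d d"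
      using rep g \<sigma> by auto
    have "X *\<^sub>v (\<rho> g *\<^sub>v w) = (\<rho> (\<sigma> g) * X) *\<^sub>v w"
      using X g w \<rho> by (simp add: W_def twisted_intertwiner_def flip: assoc_mult_mat_vec)
    also have "\<dots> = 0\<^sub>v d"
      using X(1) w \<rho>(2) by (auto simp: W_def intro!: eq_vecI)
    finally show ?thesis using w \<rho>(1) by (simp add: W_def)
  qed
  ultimately have "W = {0\<^sub>v d} \<or> W = carrier_vec d"
    using irr unfolding irreducible_rep_def by blast
  then have W: "W = carrier_vec d"
    using v by (auto simp: W_def)
  show ?thesis
  proof (rule eq_matI)
    fix r s assume "r < dim_row (0\<^sub>m d d :: real mat)" "s < dim_col (0\<^sub>m d d :: real mat)"
    then have rs: "r < d" "s < d" by auto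
    have "unit_vec d s \<in> W"
      using W by simp
    then have "X *\<^sub>v unit_vec d s = 0\<^sub>v d"
      by (simp add: W_def)
    then have "(X *\<^sub>v unit_vec d s) $ r = 0"
      using rs by simp
    then show "X $$ (r, s) = 0\<^sub>m d d $$ (r, s)"
      using rs X(1) by simp
  qed (use X in auto)
qed

lemma twisted_intertwiner_det_nonzero:
  assumes "irreducible_rep G d \<rho>" "\<sigma> \<in> carrier G \<rightarrow> carrier G"
    and "X \<in> carrier_mat d d" "twisted_intertwiner G \<rho> \<sigma> X" "X \<noteq> 0\<^sub>m d d"
  shows "det X \<noteq> 0"
  using assms twisted_intertwiner_eq_0_of_kernel det_0_iff_vec_prod_zero[OF assms(3)] by metis

lemma twisted_intertwiner_proportional:
  assumes irr: "irreducible_rep G d \<rho>" and \<sigma>: "\<sigma> \<in> carrier G \<rightarrow> carrier G" and "odd d"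
    and X0: "X0 \<in> carrier_mat d d" "twisted_intertwiner G \<rho> \<sigma> X0" "X0 \<noteq> 0\<^sub>m d d"
    and X: "X \<in> carrier_mat d d" "twisted_intertwiner G \<rho> \<sigma> X"
  shows "\<exists>c. X = c \<cdot>\<^sub>m X0"
proof -
  have rep: "real_rep G d \<rho>" using irr by (simp add: irreducible_rep_def)
  obtain M0 where M0: "M0 \<in> carrier_mat d d" "X0 * M0 = 1\<^sub>m d"
    using det_nonzero_imp_inverse[OF X0(1) twisted_intertwiner_det_nonzero[OF irr \<sigma> X0]] by blast
  have M0X: "M0 * X \<in> carrier_mat d d" using M0 X by simp
  obtain c v where "eigenvector (M0 * X) v c"
    using odd_dim_real_eigenvalue[OF M0X \<open>odd d\<close>] by (auto simp: eigenvalue_def)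
  then have v: "v \<in> carrier_vec d" "v \<noteq> 0\<^sub>v d" "(M0 * X) *\<^sub>v v = c \<cdot>\<^sub>v v"
    using M0X by (auto simp: eigenvector_def)
  have "X0 * (M0 * X) = X"
    using X0(1) M0 X(1) by (metis assoc_mult_mat left_mult_one_mat)
  then have "X *\<^sub>v v = X0 *\<^sub>v ((M0 * X) *\<^sub>v v)"
    using X0(1) M0X v(1) by (metis assoc_mult_mat_vec)
  also have "\<dots> = c \<cdot>\<^sub>v (X0 *\<^sub>v v)"
    using v(3) mult_mat_vec[OF X0(1) v(1)] by simp
  finally have kernel: "(X - c \<cdot>\<^sub>m X0) *\<^sub>v v = 0\<^sub>v d"
    using X X0 v by (simp add: minus_mult_distrib_mat_vec[of _ d d] smult_mat_mult_vec)
  have "X - c \<cdot>\<^sub>m X0 \<in> carrier_mat d d"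
    using X0 by (simp add: minus_carrier_mat)
  from twisted_intertwiner_eq_0_of_kernel[OF irr \<sigma> this
      twisted_intertwiner_minus_smult[OF rep \<sigma> X X0(1,2)] v(1,2) kernel]
  have diff: "X - c \<cdot>\<^sub>m X0 = 0\<^sub>m d d" .
  have "X = c \<cdot>\<^sub>m X0"
  proof (rule eq_matI)
    fix i j assume "i < dim_row (c \<cdot>\<^sub>m X0)" "j < dim_col (c \<cdot>\<^sub>m X0)"
    then have ij: "i < d" "j < d" using X0 by auto
    have "(X - c \<cdot>\<^sub>m X0) $$ (i, j) = 0"
      using diff ij by simp
    then show "X $$ (i, j) = (c \<cdot>\<^sub>m X0) $$ (i, j)"
      using ij X(1) X0(1) by simp
  qed (use X X0 in auto)
  then show ?thesis ..
qed

lemma twisted_intertwiner_in_normalizer: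
  assumes irr: "irreducible_rep G d \<rho>" and \<sigma>: "\<sigma> \<in> carrier G \<rightarrow> carrier G"
    and img: "\<rho> ` \<sigma> ` carrier G = \<rho> ` carrier G"
    and X: "X \<in> carrier_mat d d" "twisted_intertwiner G \<rho> \<sigma> X" "X \<noteq> 0\<^sub>m d d"
  shows "in_normalizer G d \<rho> X"
proof -
  obtain M where M: "M \<in> carrier_mat d d" "X * M = 1\<^sub>m d" "M * X = 1\<^sub>m d"
    using det_nonzero_imp_inverse[OF X(1) twisted_intertwiner_det_nonzero[OF irr \<sigma> X]] by blast
  have "X * \<rho> g * M = \<rho> (\<sigma> g)" if g: "g \<in> carrier G" for g
  proof -
    have \<rho>: "\<rho> (\<sigma> g) \<in> carrier_mat d d"
      using irr g \<sigma> by (auto simp: irreducible_rep_def real_rep_def)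
    have "X * \<rho> g * M = \<rho> (\<sigma> g) * X * M"
      using X(2) g by (simp add: twisted_intertwiner_def)
    also have "\<dots> = \<rho> (\<sigma> g)"
      using \<rho> X(1) M by simp
    finally show ?thesis .
  qed
  then have "(\<lambda>g. X * \<rho> g * M) ` carrier G = \<rho> ` carrier G"
    using img by (auto simp: image_image)
  then show ?thesis
    using X(1) M unfolding in_normalizer_def by blast
qed

section \<open>The normaliser of a multiple of an irreducible representation\<close>

lemma normalizer_rep_copies_twist:
  assumes rep: "real_rep G d \<rho>" and "0 < k" and N: "in_normalizer G (k * d) (rep_copies k \<rho>) N"
  obtains \<sigma> where "\<sigma> \<in> carrier G \<rightarrow> carrier G" "\<rho> ` \<sigma> ` carrier G = \<rho> ` carrier G"
    "\<And>g. g \<in> carrier G \<Longrightarrow> N * kron_mat (1\<^sub>m k) (\<rho> g) = kron_mat (1\<^sub>m k) (\<rho> (\<sigma> g)) * N"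
proof -
  let ?R = "rep_copies k \<rho>"
  have R: "?R g = kron_mat (1\<^sub>m k) (\<rho> g)" "\<rho> g \<in> carrier_mat d d" if "g \<in> carrier G" for g
    using rep_copies_eq_kron_mat[OF rep that] real_rep_carrier_mat[OF rep that] by simp_all
  obtain M where Nc: "N \<in> carrier_mat (k * d) (k * d)" and M: "M \<in> carrier_mat (k * d) (k * d)" "M * N = 1\<^sub>m (k * d)"
    and img: "(\<lambda>g. N * ?R g * M) ` carrier G = ?R ` carrier G"
    using N unfolding in_normalizer_def by blast
  have "\<forall>g \<in> carrier G. \<exists>h \<in> carrier G. N * ?R g * M = ?R h"
    using img by blast
  then obtain \<sigma> where \<sigma>: "\<sigma> \<in> carrier G \<rightarrow> carrier G"
    and conj: "\<And>g. g \<in> carrier G \<Longrightarrow> N * ?R g * M = ?R (\<sigma> g)"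
    by (metis Pi_I)
  have comm: "N * kron_mat (1\<^sub>m k) (\<rho> g) = kron_mat (1\<^sub>m k) (\<rho> (\<sigma> g)) * N" if g: "g \<in> carrier G" for g
  proof -
    have "N * kron_mat (1\<^sub>m k) (\<rho> g) = N * ?R g * (M * N)"
      using Nc M R[OF g] by simp
    also have "\<dots> = (N * ?R g * M) * N"
      by (rule assoc_mult_mat[of _ "k * d" "k * d", symmetric]) (use Nc M R[OF g] in simp_all)
    also have "\<dots> = kron_mat (1\<^sub>m k) (\<rho> (\<sigma> g)) * N"
      using conj[OF g] R[OF funcset_mem[OF \<sigma> g]] by simp
    finally show ?thesis .
  qed
  have "\<rho> ` carrier G \<subseteq> \<rho> ` \<sigma> ` carrier G"
  proof
    fix B assume "B \<in> \<rho> ` carrier G"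
    then obtain h where h: "h \<in> carrier G" "B = \<rho> h" by blast
    then obtain g where g: "g \<in> carrier G" "N * ?R g * M = ?R h"
      using img by (metis (no_types, lifting) imageE imageI)
    have \<sigma>g: "\<sigma> g \<in> carrier G" using \<sigma> g by auto
    have "kron_mat (1\<^sub>m k) (\<rho> (\<sigma> g)) = kron_mat (1\<^sub>m k) (\<rho> h)"
      using conj g h R \<sigma>g by metis
    then have "\<rho> (\<sigma> g) = \<rho> h"
      using mat_block_kron_one_mat_diag[OF R(2)[OF \<sigma>g] \<open>0 < k\<close>]
        mat_block_kron_one_mat_diag[OF R(2)[OF h(1)] \<open>0 < k\<close>]
      by metis
    then show "B \<in> \<rho> ` \<sigma> ` carrier G"
      unfolding h(2) by (rule image_eqI[OF sym imageI[OF g(1)]])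
  qed
  moreover have "\<rho> ` \<sigma> ` carrier G \<subseteq> \<rho> ` carrier G"
    using \<sigma> by (auto simp: Pi_iff)
  ultimately have "\<rho> ` \<sigma> ` carrier G = \<rho> ` carrier G"
    by (rule subset_antisym[rotated])
  then show thesis
    by (rule that[OF \<sigma> _ comm])
qed

lemma mat_block_twisted_intertwiner:
  assumes rep: "real_rep G d \<rho>" and \<sigma>: "\<sigma> \<in> carrier G \<rightarrow> carrier G"
    and N: "N \<in> carrier_mat (k * d) (k * d)"
    and comm: "\<And>g. g \<in> carrier G \<Longrightarrow> N * kron_mat (1\<^sub>m k) (\<rho> g) = kron_mat (1\<^sub>m k) (\<rho> (\<sigma> g)) * N"
    and ij: "i < k" "j < k"
  shows "twisted_intertwiner G \<rho> \<sigma> (mat_block d N i j)"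
  unfolding twisted_intertwiner_def
proof
  fix g assume g: "g \<in> carrier G"
  have \<rho>: "\<rho> g \<in> carrier_mat d d" "\<rho> (\<sigma> g) \<in> carrier_mat d d"
    using real_rep_carrier_mat[OF rep] g \<sigma> by auto
  show "mat_block d N i j * \<rho> g = \<rho> (\<sigma> g) * mat_block d N i j"
    using comm[OF g] mat_block_mult_kron_one_right[OF N \<rho>(1) ij] mat_block_kron_one_mult_left[OF N \<rho>(2) ij]
    by simp
qed

lemma normalizer_rep_copies_eq_kron:
  assumes irr: "irreducible_rep G d \<rho>" and "odd d" and "0 < k"
    and N: "in_normalizer G (k * d) (rep_copies k \<rho>) N"
  obtains A X where "A \<in> carrier_mat k k" "N = kron_mat A X" "in_normalizer G d \<rho> X"
proof -
  have rep: "real_rep G d \<rho>" and "0 < d"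
    using irr by (simp_all add: irreducible_rep_def)
  obtain M where Nc: "N \<in> carrier_mat (k * d) (k * d)" and "M \<in> carrier_mat (k * d) (k * d)" "N * M = 1\<^sub>m (k * d)"
    using N unfolding in_normalizer_def by blast
  obtain \<sigma> where \<sigma>: "\<sigma> \<in> carrier G \<rightarrow> carrier G" "\<rho> ` \<sigma> ` carrier G = \<rho> ` carrier G"
    and comm: "\<And>g. g \<in> carrier G \<Longrightarrow> N * kron_mat (1\<^sub>m k) (\<rho> g) = kron_mat (1\<^sub>m k) (\<rho> (\<sigma> g)) * N"
    using normalizer_rep_copies_twist[OF rep \<open>0 < k\<close> N] by blast
  have blocks: "\<And>i j. i < k \<Longrightarrow> j < k \<Longrightarrow> twisted_intertwiner G \<rho> \<sigma> (mat_block d N i j)"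
    using mat_block_twisted_intertwiner[OF rep \<sigma>(1) Nc] comm by blast
  have "N \<noteq> 0\<^sub>m (k * d) (k * d)"
  proof
    assume "N = 0\<^sub>m (k * d) (k * d)"
    then have "(1\<^sub>m (k * d) :: real mat) $$ (0, 0) = 0\<^sub>m (k * d) (k * d) $$ (0, 0)"
      using \<open>N * M = 1\<^sub>m (k * d)\<close> \<open>M \<in> carrier_mat (k * d) (k * d)\<close> by simp
    then show False
      using \<open>0 < k\<close> \<open>0 < d\<close> by simp
  qed
  then obtain i0 j0 where ij0: "i0 < k" "j0 < k" and X0: "mat_block d N i0 j0 \<noteq> 0\<^sub>m d d"
    using mat_eq_blockI[OF Nc zero_carrier_mat] mat_block_zero_mat by metis
  define X where "X = mat_block d N i0 j0"
  have "\<forall>i j. \<exists>c. i < k \<longrightarrow> j < k \<longrightarrow> mat_block d N i j = c \<cdot>\<^sub>m X"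
    using twisted_intertwiner_proportional[OF irr \<sigma>(1) \<open>odd d\<close> _ blocks[OF ij0] X0] blocks
    unfolding X_def by auto
  then obtain a where a: "\<And>i j. i < k \<Longrightarrow> j < k \<Longrightarrow> mat_block d N i j = a i j \<cdot>\<^sub>m X"
    by metis
  define A where "A = mat k k (\<lambda>(i, j). a i j)"
  have A: "A \<in> carrier_mat k k" and X: "X \<in> carrier_mat d d"
    by (simp_all add: A_def X_def)
  moreover have "N = kron_mat A X"
  proof (rule mat_eq_blockI[OF Nc])
    fix i j assume "i < k" "j < k"
    then show "mat_block d N i j = mat_block d (kron_mat A X) i j"
      using a mat_block_kron_mat[OF A X] by (simp add: A_def)
  qed (use A X in simp)
  moreover have "in_normalizer G d \<rho> X"
    using twisted_intertwiner_in_normalizer[OF irr \<sigma>] blocks[OF ij0] X0 unfolding X_def by simp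
  ultimately show thesis
    using that by blast
qed

theorem lemma3p1p2:
  fixes G :: "('g, 'b) monoid_scheme" and \<rho> :: "'g \<Rightarrow> real mat" and d k :: nat
  assumes "group G" and "finite (carrier G)"
    and "irreducible_rep G d \<rho>" and "odd d"
    and "eigenvalue_one_property G d \<rho>"
    and "odd k"
  shows "eigenvalue_one_property G (k * d) (rep_copies k \<rho>)"
  unfolding eigenvalue_one_property_def
proof (intro allI impI, elim conjE)
  fix N assume N: "in_normalizer G (k * d) (rep_copies k \<rho>) N" and fo: "finite_order_mat (k * d) N"
  have rep: "real_rep G d \<rho>" and "0 < d"
    using assms(3) by (simp_all add: irreducible_rep_def)
  obtain A X where A: "A \<in> carrier_mat k k" and NAX: "N = kron_mat A X" and X: "in_normalizer G d \<rho> X"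
    using normalizer_rep_copies_eq_kron[OF assms(3,4) odd_pos[OF \<open>odd k\<close>] N] .
  have Xc: "X \<in> carrier_mat d d"
    using X by (simp add: in_normalizer_def)
  obtain \<mu> w where \<mu>: "\<mu> \<noteq> 0" and w: "eigenvector A w \<mu>" and "finite_order_mat d (\<mu> \<cdot>\<^sub>m X)"
    using kron_mat_finite_order_rescale[OF A \<open>odd k\<close> Xc \<open>0 < d\<close>] fo NAX by metis
  moreover have "in_normalizer G d \<rho> (\<mu> \<cdot>\<^sub>m X)"
    using in_normalizer_smult[OF rep X \<mu>] .
  ultimately obtain g v where g: "g \<in> carrier G" and "eigenvector (\<rho> g * (\<mu> \<cdot>\<^sub>m X)) v 1"
    using assms(5) unfolding eigenvalue_one_property_def eigenvalue_def by blast
  moreover have \<rho>g: "\<rho> g \<in> carrier_mat d d"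
    using real_rep_carrier_mat[OF rep g] .
  ultimately have "eigenvector (\<rho> g * X) v (1 / \<mu>)"
    using eigenvector_smult_mat[of "\<rho> g * X" d \<mu>] \<mu> Xc by (simp add: mult_smult_distrib)
  then have "eigenvector (kron_mat A (\<rho> g * X)) (kron_vec w v) (\<mu> * (1 / \<mu>))"
    by (rule eigenvector_kron[OF A mult_carrier_mat[OF \<rho>g Xc] w])
  moreover have "kron_mat A (\<rho> g * X) = rep_copies k \<rho> g * N"
    using rep_copies_eq_kron_mat[OF rep g] kron_mat_mult[OF one_carrier_mat A \<rho>g Xc] NAX A by simp
  ultimately show "\<exists>g\<in>carrier G. eigenvalue (rep_copies k \<rho> g * N) 1"
    using g \<mu> unfolding eigenvalue_def by auto
qed

end
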